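(* Let $d\in\mathbf{N}$, let $A$ be a symmetric $(d+1)\times(d+1)$ matrix with rational entries, let $\Delta_d=\{x\in\mathbf{R}^{d+1}: \sum_{i=1}^{d+1}x_i=1,\ x_i\ge0\ \forall i\}$ with relative interior $\Delta_d^o=\{x\in\Delta_d: x_i>0\ \forall i\}$, and define $f:\Delta_d\to\mathbf{R}$ by $f(x)=\frac12x^TAx$. (a) $f$ attains its maximum and its minimum on $\Delta_d$ at points whose entries are all rational. (b) If there is $x\in\Delta_d^o$ with $f(x)=M:=\max_{\Delta_d}f$, then there is $x'\in\Delta_d^o$ with all entries rational and $f(x')=M$. The same holds with the maximum replaced by the minimum. *)

theory Defs
  imports Complex_Main
begin

text \<open>Vectors in R^(d+1) are functions nat => real, coordinates indexed by 0..d,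
  and coordinates beyond d are required to be 0 (extensional convention).\<close>

definition std_simplex :: "nat \<Rightarrow> (nat \<Rightarrow> real) set" where
  "std_simplex d = {x. (\<Sum>i\<le>d. x i) = 1 \<and> (\<forall>i\<le>d. 0 \<le> x i) \<and> (\<forall>i>d. x i = 0)}"

definition std_simplex_relint :: "nat \<Rightarrow> (nat \<Rightarrow> real) set" where
  "std_simplex_relint d = {x \<in> std_simplex d. \<forall>i\<le>d. 0 < x i}"

definition quad_form :: "nat \<Rightarrow> (nat \<Rightarrow> nat \<Rightarrow> rat) \<Rightarrow> (nat \<Rightarrow> real) \<Rightarrow> real" where
  "quad_form d A x = (1/2) * (\<Sum>i\<le>d. \<Sum>j\<le>d. x i * of_rat (A i j) * x j)"

definition rational_vec :: "(nat \<Rightarrow> real) \<Rightarrow> bool" where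
  "rational_vec x \<longleftrightarrow> (\<forall>i. x i \<in> \<rat>)"

end

theory Submission
  imports Defs "HOL-Analysis.Analysis"
begin

(* At a maximiser x of f on the simplex, moving mass between two coordinates of the support S
   of x shows that the entries (A x)_i, i \<in> S, all coincide. So x solves a linear system with
   rational coefficients: the coordinates sum to 1, vanish off S, and (A_i - A_j) x = 0 for
   i, j \<in> S. By Gaussian elimination such a system has rational solutions arbitrarily close to x;
   one close enough is still positive on S, hence lies in the simplex, and as A x' is also constant
   on S while x' - x is supported on S with coordinate sum 0, f(x') - f(x) = (x' - x) A (x' + x) / 2
   vanishes. Minima are the maxima of -f. *)

definition matvec :: "nat \<Rightarrow> (nat \<Rightarrow> nat \<Rightarrow> rat) \<Rightarrow> (nat \<Rightarrow> real) \<Rightarrow> nat \<Rightarrow> real" where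
  "matvec d A v i = (\<Sum>j\<le>d. of_rat (A i j) * v j)"

lemma quad_form_eq_matvec: "quad_form d A x = (\<Sum>i\<le>d. x i * matvec d A x i) / 2"
proof -
  have "(\<Sum>i\<le>d. x i * matvec d A x i) = (\<Sum>i\<le>d. \<Sum>j\<le>d. x i * of_rat (A i j) * x j)"
    by (simp add: matvec_def sum_distrib_left mult.assoc)
  then show ?thesis by (simp add: quad_form_def)
qed

lemma matvec_lincomb:
  "matvec d A (\<lambda>j. a * u j + b * v j) i = a * matvec d A u i + b * matvec d A v i"
  by (simp add: matvec_def sum.distrib sum_distrib_left algebra_simps)

lemma quad_form_uminus: "quad_form d (\<lambda>i j. - A i j) x = - quad_form d A x"
  by (simp add: quad_form_def of_rat_minus sum_negf)

lemma matvec_pairing_sym: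
  assumes symm: "\<forall>i\<le>d. \<forall>j\<le>d. A i j = A j i"
  shows "(\<Sum>i\<le>d. u i * matvec d A v i) = (\<Sum>i\<le>d. v i * matvec d A u i)"
proof -
  have "(\<Sum>i\<le>d. u i * matvec d A v i) = (\<Sum>i\<le>d. \<Sum>j\<le>d. v j * (of_rat (A j i) * u i))"
    unfolding matvec_def sum_distrib_left by (intro sum.cong refl) (simp add: symm)
  also have "\<dots> = (\<Sum>i\<le>d. v i * matvec d A u i)"
    unfolding matvec_def sum_distrib_left by (rule sum.swap)
  finally show ?thesis .
qed

lemma quad_form_add_scaled:
  assumes symm: "\<forall>i\<le>d. \<forall>j\<le>d. A i j = A j i"
  shows "quad_form d A (\<lambda>i. x i + t * w i)
           = quad_form d A x + t * (\<Sum>i\<le>d. w i * matvec d A x i) + t\<^sup>2 * quad_form d A w"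
proof -
  have "matvec d A (\<lambda>j. x j + t * w j) i = matvec d A x i + t * matvec d A w i" for i
    using matvec_lincomb[of d A 1 x t w i] by simp
  then have "2 * quad_form d A (\<lambda>i. x i + t * w i)
      = (\<Sum>i\<le>d. x i * matvec d A x i) + t * (\<Sum>i\<le>d. w i * matvec d A x i)
        + t * (\<Sum>i\<le>d. x i * matvec d A w i) + t\<^sup>2 * (\<Sum>i\<le>d. w i * matvec d A w i)"
    by (simp add: quad_form_eq_matvec sum.distrib sum_distrib_left algebra_simps power2_eq_square)
  then show ?thesis
    using matvec_pairing_sym[OF symm, of x w] by (simp add: quad_form_eq_matvec)
qed

lemma quad_form_diff:
  assumes symm: "\<forall>i\<le>d. \<forall>j\<le>d. A i j = A j i"
  shows "quad_form d A y - quad_form d A x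
           = (\<Sum>i\<le>d. (y i - x i) * (matvec d A y i + matvec d A x i)) / 2"
  using matvec_pairing_sym[OF symm, of x y]
  by (simp add: quad_form_eq_matvec algebra_simps sum.distrib sum_subtractf diff_divide_distrib)

lemma continuous_on_coordinate: "continuous_on S (\<lambda>x::nat \<Rightarrow> real. x i)"
  by (rule continuous_on_subset[OF continuous_on_product_coordinates]) simp

lemma continuous_on_quad_form: "continuous_on S (quad_form d A)"
  unfolding quad_form_def by (intro continuous_intros continuous_on_coordinate)

lemma std_simplex_nonempty: "std_simplex d \<noteq> {}"
proof -
  have "(\<lambda>i. if i = 0 then 1 else 0) \<in> std_simplex d"
    by (simp add: std_simplex_def)
  then show ?thesis by blast
qed

lemma std_simplex_le_1: "x \<in> std_simplex d \<Longrightarrow> x i \<le> 1"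
proof (cases "i \<le> d")
  case True
  assume x: "x \<in> std_simplex d"
  then have "x i \<le> (\<Sum>j\<le>d. x j)"
    using True by (intro member_le_sum) (auto simp: std_simplex_def)
  then show ?thesis using x by (simp add: std_simplex_def)
qed (simp add: std_simplex_def)

lemma compact_std_simplex: "compact (std_simplex d)"
proof -
  define B where "B i = (if i \<le> d then {0..1} else {0 :: real})" for i :: nat
  have "compactin (product_topology (\<lambda>_. euclidean) UNIV) (PiE UNIV B)"
    by (subst compactin_PiE) (auto simp: B_def)
  then have "compact (PiE UNIV B)"
    by (simp add: euclidean_product_topology)
  moreover have "closed {x :: nat \<Rightarrow> real. (\<Sum>i\<le>d. x i) = 1}"
    by (intro closed_Collect_eq continuous_intros continuous_on_coordinate)
  moreover have "std_simplex d = PiE UNIV B \<inter> {x. (\<Sum>i\<le>d. x i) = 1}"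
  proof (intro set_eqI iffI)
    fix x assume x: "x \<in> std_simplex d"
    have "x i \<in> B i" for i
      using x std_simplex_le_1[OF x, of i] by (simp add: std_simplex_def B_def)
    then show "x \<in> PiE UNIV B \<inter> {x. (\<Sum>i\<le>d. x i) = 1}"
      using x by (simp add: std_simplex_def PiE_iff)
  next
    fix x assume x: "x \<in> PiE UNIV B \<inter> {x. (\<Sum>i\<le>d. x i) = 1}"
    then have "x i \<in> B i" for i
      by (simp add: PiE_iff)
    then have "(\<forall>i\<le>d. 0 \<le> x i) \<and> (\<forall>i>d. x i = 0)"
      unfolding B_def by (metis atLeastAtMost_iff not_le singletonD)
    then show "x \<in> std_simplex d"
      using x by (simp add: std_simplex_def)
  qed
  ultimately show ?thesis
    using compact_Int_closed by simp
qed

lemma std_simplex_shift_mass: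
  assumes x: "x \<in> std_simplex d" and ij: "i \<le> d" "j \<le> d" "i \<noteq> j"
    and t: "- x i \<le> t" "t \<le> x j"
  shows "(\<lambda>k. x k + t * ((if k = i then 1 else 0) - (if k = j then 1 else 0))) \<in> std_simplex d"
proof -
  have "(\<Sum>k\<le>d. (if k = i then 1 else 0) - (if k = j then 1 else 0)) = (0 :: real)"
    using ij by (simp add: sum_subtractf)
  then have "(\<Sum>k\<le>d. x k + t * ((if k = i then 1 else 0) - (if k = j then 1 else 0))) = 1"
    using x by (simp add: std_simplex_def sum.distrib sum_distrib_left[symmetric])
  moreover have "0 \<le> x k + t * ((if k = i then 1 else 0) - (if k = j then 1 else 0))" if "k \<le> d" for k
    using x that ij t by (auto simp: std_simplex_def)
  ultimately show ?thesis
    using x ij by (simp add: std_simplex_def)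
qed

lemma matvec_eq_on_support_of_max:
  assumes symm: "\<forall>i\<le>d. \<forall>j\<le>d. A i j = A j i"
    and x: "x \<in> std_simplex d"
    and max: "\<forall>y\<in>std_simplex d. quad_form d A y \<le> quad_form d A x"
    and ij: "i \<le> d" "j \<le> d" "0 < x i" "0 < x j"
  shows "matvec d A x i = matvec d A x j"
proof (cases "i = j")
  case False
  define w :: "nat \<Rightarrow> real" where "w k = (if k = i then 1 else 0) - (if k = j then 1 else 0)" for k
  define g where "g = matvec d A x i - matvec d A x j"
  have "w k * matvec d A x k
      = (if k = i then matvec d A x k else 0) - (if k = j then matvec d A x k else 0)" for k
    by (simp add: w_def left_diff_distrib)
  then have g: "(\<Sum>k\<le>d. w k * matvec d A x k) = g"
    using ij by (simp add: g_def sum_subtractf)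
  have on_simplex: "(\<lambda>k. x k + t * w k) \<in> std_simplex d" if "\<bar>t\<bar> < min (x i) (x j)" for t
    unfolding w_def using that by (intro std_simplex_shift_mass[OF x ij(1,2) False]) auto
  define \<phi> where "\<phi> t = quad_form d A x + t * g + t\<^sup>2 * quad_form d A w" for t
  have der: "DERIV \<phi> 0 :> g"
    unfolding \<phi>_def by (auto intro!: derivative_eq_intros)
  have loc_max: "\<phi> t \<le> \<phi> 0" if "\<bar>0 - t\<bar> < min (x i) (x j)" for t
  proof -
    have "quad_form d A (\<lambda>k. x k + t * w k) \<le> quad_form d A x"
      using max on_simplex[of t] that by simp
    then show ?thesis
      using quad_form_add_scaled[OF symm, of x t w] by (simp add: \<phi>_def g)
  qed
  have "g = 0"
    using DERIV_local_max[OF der, of "min (x i) (x j)"] loc_max ij by simp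
  then show ?thesis by (simp add: g_def)
qed simp

definition satisfies_lin_eqs :: "nat \<Rightarrow> ((nat \<Rightarrow> rat) \<times> rat) set \<Rightarrow> (nat \<Rightarrow> real) \<Rightarrow> bool" where
  "satisfies_lin_eqs n E x \<longleftrightarrow> (\<forall>(a, b)\<in>E. (\<Sum>i<n. of_rat (a i) * x i) = of_rat b)"

definition pivot_elim :: "nat \<Rightarrow> (nat \<Rightarrow> rat) \<Rightarrow> rat \<Rightarrow> (nat \<Rightarrow> rat) \<times> rat \<Rightarrow> (nat \<Rightarrow> rat) \<times> rat" where
  "pivot_elim n a0 b0 = (\<lambda>(a, b). (\<lambda>i. a i - a n / a0 n * a0 i, b - a n / a0 n * b0))"

lemma satisfies_lin_eqs_cong:
  "(\<And>i. i < n \<Longrightarrow> x i = y i) \<Longrightarrow> satisfies_lin_eqs n E x \<longleftrightarrow> satisfies_lin_eqs n E y"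
proof -
  assume "\<And>i. i < n \<Longrightarrow> x i = y i"
  then have "(\<Sum>i<n. c i * x i) = (\<Sum>i<n. c i * y i)" for c :: "nat \<Rightarrow> real"
    by (intro sum.cong) auto
  then show ?thesis by (simp add: satisfies_lin_eqs_def)
qed

lemma satisfies_lin_eqs_Suc_free:
  "\<forall>(a, b)\<in>E. a n = 0 \<Longrightarrow> satisfies_lin_eqs (Suc n) E x \<longleftrightarrow> satisfies_lin_eqs n E x"
  unfolding satisfies_lin_eqs_def by fastforce

lemma satisfies_lin_eqs_Suc_pivot:
  assumes "(a0, b0) \<in> E" "a0 n \<noteq> 0"
  shows "satisfies_lin_eqs (Suc n) E x \<longleftrightarrow>
           satisfies_lin_eqs n (pivot_elim n a0 b0 ` E) x \<and>
           of_rat (a0 n) * x n = of_rat b0 - (\<Sum>i<n. of_rat (a0 i) * x i)"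
    (is "?sat \<longleftrightarrow> ?elim \<and> ?pivot")
proof -
  have elim_iff: "(\<Sum>i<n. of_rat (a i) * x i) + of_rat (a n) * x n = of_rat b \<longleftrightarrow>
      (\<Sum>i<n. of_rat (a i - a n / a0 n * a0 i) * x i) = of_rat (b - a n / a0 n * b0)"
    if pivot: ?pivot for a b
  proof -
    have lin: "(\<Sum>i<n. of_rat (a i - c * a0 i) * x i)
        = (\<Sum>i<n. of_rat (a i) * x i) - of_rat c * (\<Sum>i<n. of_rat (a0 i) * x i)" for c
      by (simp add: of_rat_diff of_rat_mult left_diff_distrib sum_subtractf sum_distrib_left mult.assoc)
    have pivot_scaled: "of_rat (a n / a0 n) * (\<Sum>i<n. of_rat (a0 i) * x i)
        = of_rat (a n / a0 n) * of_rat b0 - of_rat (a n) * x n"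
    proof -
      have "(\<Sum>i<n. of_rat (a0 i) * x i) = of_rat b0 - of_rat (a0 n) * x n"
        using pivot by simp
      then show ?thesis
        using assms(2) by (simp add: of_rat_divide right_diff_distrib)
    qed
    show ?thesis
      using lin[of "a n / a0 n"] pivot_scaled by (simp only: of_rat_diff of_rat_mult) linarith
  qed
  show ?thesis
  proof
    assume sat: ?sat
    then have pivot: ?pivot
      using assms(1) by (force simp: satisfies_lin_eqs_def)
    then show "?elim \<and> ?pivot"
      using sat elim_iff by (force simp: satisfies_lin_eqs_def pivot_elim_def)
  next
    assume "?elim \<and> ?pivot"
    then show ?sat
      using elim_iff by (force simp: satisfies_lin_eqs_def pivot_elim_def)
  qed
qed

lemma abs_sum_mult_diff_le:
  fixes c x y :: "nat \<Rightarrow> real"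
  assumes "\<forall>i<n. \<bar>x i - y i\<bar> \<le> \<epsilon>"
  shows "\<bar>(\<Sum>i<n. c i * x i) - (\<Sum>i<n. c i * y i)\<bar> \<le> (\<Sum>i<n. \<bar>c i\<bar>) * \<epsilon>"
proof -
  have "\<bar>(\<Sum>i<n. c i * x i) - (\<Sum>i<n. c i * y i)\<bar> = \<bar>\<Sum>i<n. c i * (x i - y i)\<bar>"
    by (simp add: sum_subtractf right_diff_distrib)
  also have "\<dots> \<le> (\<Sum>i<n. \<bar>c i\<bar> * \<epsilon>)"
    using assms by (intro order.trans[OF sum_abs] sum_mono) (simp add: abs_mult mult_left_mono)
  finally show ?thesis
    by (simp add: sum_distrib_right)
qed

lemma rational_solution_near_Suc_free:
  assumes free: "\<forall>(a, b)\<in>E. a n = 0" and "0 < e"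
    and IH: "\<exists>y. (\<forall>i<n. y i \<in> \<rat> \<and> \<bar>y i - x i\<bar> < e) \<and> satisfies_lin_eqs n E y"
  shows "\<exists>y. (\<forall>i<Suc n. y i \<in> \<rat> \<and> \<bar>y i - x i\<bar> < e) \<and> satisfies_lin_eqs (Suc n) E y"
proof -
  obtain y where y: "\<forall>i<n. y i \<in> \<rat> \<and> \<bar>y i - x i\<bar> < e" "satisfies_lin_eqs n E y"
    using IH by blast
  obtain r where r: "r \<in> \<rat>" "x n - e < r" "r < x n + e"
    using Rats_dense_in_real[of "x n - e" "x n + e"] \<open>0 < e\<close> by auto
  have "satisfies_lin_eqs n E (y(n := r))"
    using y(2) satisfies_lin_eqs_cong[of n "y(n := r)" y] by simp
  then have "satisfies_lin_eqs (Suc n) E (y(n := r))"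
    using free satisfies_lin_eqs_Suc_free by blast
  moreover have "\<forall>i<Suc n. (y(n := r)) i \<in> \<rat> \<and> \<bar>(y(n := r)) i - x i\<bar> < e"
    using y(1) r by (auto simp: less_Suc_eq)
  ultimately show ?thesis by blast
qed

lemma rational_solution_near_Suc_pivot:
  assumes pivot: "(a0, b0) \<in> E" "a0 n \<noteq> 0"
    and sat: "satisfies_lin_eqs (Suc n) E x" and "0 < e"
    and IH: "\<And>\<epsilon>. 0 < \<epsilon> \<Longrightarrow>
      \<exists>y. (\<forall>i<n. y i \<in> \<rat> \<and> \<bar>y i - x i\<bar> < \<epsilon>) \<and> satisfies_lin_eqs n (pivot_elim n a0 b0 ` E) y"
  shows "\<exists>y. (\<forall>i<Suc n. y i \<in> \<rat> \<and> \<bar>y i - x i\<bar> < e) \<and> satisfies_lin_eqs (Suc n) E y"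
proof -
  define C where "C = (\<Sum>i<n. \<bar>of_rat (a0 i)\<bar>) / \<bar>of_rat (a0 n) :: real\<bar>"
  have "C \<ge> 0"
    unfolding C_def by (intro divide_nonneg_nonneg sum_nonneg) auto
  define \<epsilon> where "\<epsilon> = e / (C + 1)"
  have "0 < \<epsilon>" "\<epsilon> \<le> e" "C * \<epsilon> < e"
    using \<open>C \<ge> 0\<close> \<open>0 < e\<close> by (simp_all add: \<epsilon>_def field_simps)
  have x_n: "x n = (of_rat b0 - (\<Sum>i<n. of_rat (a0 i) * x i)) / of_rat (a0 n)"
    using sat satisfies_lin_eqs_Suc_pivot[OF pivot] pivot(2)
    by (auto simp: nonzero_eq_divide_eq mult.commute)
  obtain y where y: "\<forall>i<n. y i \<in> \<rat> \<and> \<bar>y i - x i\<bar> < \<epsilon>"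
    "satisfies_lin_eqs n (pivot_elim n a0 b0 ` E) y"
    using IH[OF \<open>0 < \<epsilon>\<close>] by blast
  define r where "r = (of_rat b0 - (\<Sum>i<n. of_rat (a0 i) * y i)) / of_rat (a0 n)"
  have "r \<in> \<rat>"
    using y(1) unfolding r_def by (intro Rats_divide Rats_diff Rats_sum Rats_mult) auto
  have "\<bar>r - x n\<bar>
      = \<bar>(\<Sum>i<n. of_rat (a0 i) * y i) - (\<Sum>i<n. of_rat (a0 i) * x i)\<bar> / \<bar>of_rat (a0 n)\<bar>"
    unfolding r_def x_n by (simp add: diff_divide_distrib[symmetric] abs_divide abs_minus_commute)
  also have "\<dots> \<le> (\<Sum>i<n. \<bar>of_rat (a0 i)\<bar>) * \<epsilon> / \<bar>of_rat (a0 n)\<bar>"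
    using y(1) by (intro divide_right_mono abs_sum_mult_diff_le) auto
  also have "\<dots> < e"
    using \<open>C * \<epsilon> < e\<close> by (simp add: C_def)
  finally have "\<bar>r - x n\<bar> < e" .
  have "satisfies_lin_eqs n (pivot_elim n a0 b0 ` E) (y(n := r))"
    using y(2) satisfies_lin_eqs_cong[of n "y(n := r)" y] by simp
  moreover have "(\<Sum>i<n. of_rat (a0 i) * (y(n := r)) i) = (\<Sum>i<n. of_rat (a0 i) * y i)"
    by (intro sum.cong) auto
  ultimately have "satisfies_lin_eqs (Suc n) E (y(n := r))"
    using pivot(2) by (simp add: satisfies_lin_eqs_Suc_pivot[OF pivot] r_def)
  moreover have "\<forall>i<Suc n. (y(n := r)) i \<in> \<rat> \<and> \<bar>(y(n := r)) i - x i\<bar> < e"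
    using y(1) \<open>r \<in> \<rat>\<close> \<open>\<bar>r - x n\<bar> < e\<close> \<open>\<epsilon> \<le> e\<close> by (auto simp: less_Suc_eq)
  ultimately show ?thesis by blast
qed

lemma rational_solution_near:
  assumes "satisfies_lin_eqs n E x" "0 < e"
  shows "\<exists>y. (\<forall>i<n. y i \<in> \<rat> \<and> \<bar>y i - x i\<bar> < e) \<and> satisfies_lin_eqs n E y"
  using assms
proof (induction n arbitrary: E e)
  case 0
  then show ?case by blast
next
  case (Suc n)
  show ?case
  proof (cases "\<forall>(a, b)\<in>E. a n = 0")
    case True
    then show ?thesis
      using Suc satisfies_lin_eqs_Suc_free by (intro rational_solution_near_Suc_free) blast+
  next
    case False
    then obtain a0 b0 where pivot: "(a0, b0) \<in> E" "a0 n \<noteq> 0" by auto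
    have "satisfies_lin_eqs n (pivot_elim n a0 b0 ` E) x"
      using Suc.prems(1) satisfies_lin_eqs_Suc_pivot[OF pivot] by blast
    then show ?thesis
      using Suc by (intro rational_solution_near_Suc_pivot[OF pivot]) blast+
  qed
qed

lemma quad_form_eq_if_matvec_const:
  assumes symm: "\<forall>i\<le>d. \<forall>j\<le>d. A i j = A j i"
    and sum_eq: "(\<Sum>i\<le>d. x i) = (\<Sum>i\<le>d. y i)"
    and outside: "\<forall>i\<le>d. i \<notin> S \<longrightarrow> x i = y i"
    and const_x: "\<forall>i\<in>S. matvec d A x i = cx" and const_y: "\<forall>i\<in>S. matvec d A y i = cy"
  shows "quad_form d A y = quad_form d A x"
proof -
  have "quad_form d A y - quad_form d A x
      = (\<Sum>i\<le>d. (y i - x i) * (matvec d A y i + matvec d A x i)) / 2"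
    by (rule quad_form_diff[OF symm])
  also have "\<dots> = (\<Sum>i\<le>d. (y i - x i) * (cy + cx)) / 2"
    using outside const_x const_y by (intro arg_cong[where f = "\<lambda>s. s / 2"] sum.cong) auto
  also have "\<dots> = 0"
    using sum_eq by (simp add: sum_distrib_right[symmetric] sum_subtractf)
  finally show ?thesis by simp
qed

lemma std_simplex_support_nonempty:
  assumes "x \<in> std_simplex d"
  obtains i where "i \<le> d" "0 < x i"
proof -
  have "\<not> (\<forall>i\<le>d. x i = 0)"
  proof
    assume "\<forall>i\<le>d. x i = 0"
    then have "(\<Sum>i\<le>d. x i) = 0" by simp
    with assms show False by (simp add: std_simplex_def)
  qed
  then show ?thesis
    using assms that by (force simp: std_simplex_def)
qed

lemma rational_solution_near_vanishing:
  assumes "satisfies_lin_eqs n E x" "0 < e"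
  shows "\<exists>y. rational_vec y \<and> (\<forall>i<n. \<bar>y i - x i\<bar> < e) \<and> (\<forall>i\<ge>n. y i = 0) \<and>
           satisfies_lin_eqs n E y"
proof -
  obtain y where y: "\<forall>i<n. y i \<in> \<rat> \<and> \<bar>y i - x i\<bar> < e" "satisfies_lin_eqs n E y"
    using rational_solution_near[OF assms] by blast
  define y' where "y' i = (if i < n then y i else 0)" for i
  have "satisfies_lin_eqs n E y'"
    using y(2) satisfies_lin_eqs_cong[of n y' y] by (simp add: y'_def)
  moreover have "rational_vec y'"
    using y(1) by (simp add: rational_vec_def y'_def)
  ultimately show ?thesis
    using y(1) by (auto simp: y'_def)
qed

definition support_system :: "nat \<Rightarrow> (nat \<Rightarrow> nat \<Rightarrow> rat) \<Rightarrow> nat set \<Rightarrow> ((nat \<Rightarrow> rat) \<times> rat) set" where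
  "support_system d A S = insert (\<lambda>_. 1, 1)
     ((\<lambda>i. (\<lambda>k. if k = i then 1 else 0, 0)) ` {i. i \<le> d \<and> i \<notin> S} \<union>
      (\<lambda>(i, j). (\<lambda>k. A i k - A j k, 0)) ` (S \<times> S))"

lemma satisfies_support_system_iff:
  "satisfies_lin_eqs (Suc d) (support_system d A S) z \<longleftrightarrow>
     (\<Sum>i\<le>d. z i) = 1 \<and> (\<forall>i\<le>d. i \<notin> S \<longrightarrow> z i = 0) \<and>
     (\<forall>i\<in>S. \<forall>j\<in>S. matvec d A z i = matvec d A z j)"
proof -
  have unit: "(\<Sum>k\<le>d. of_rat (if k = i then 1 else 0) * z k) = z i" if "i \<le> d" for i
    using that by (simp add: if_distrib[of of_rat] if_distrib[of "\<lambda>c. c * z _"] cong: if_cong)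
  have row_diff: "(\<Sum>k\<le>d. of_rat (A i k - A j k) * z k) = matvec d A z i - matvec d A z j" for i j
    by (simp add: matvec_def of_rat_diff left_diff_distrib sum_subtractf)
  show ?thesis
    by (simp add: satisfies_lin_eqs_def support_system_def lessThan_Suc_atMost ball_Un Ball_image_comp
        unit row_diff)
      blast
qed

lemma rational_maximizer_keeping_support:
  assumes symm: "\<forall>i\<le>d. \<forall>j\<le>d. A i j = A j i"
    and x: "x \<in> std_simplex d"
    and max: "\<forall>y\<in>std_simplex d. quad_form d A y \<le> quad_form d A x"
  shows "\<exists>x'\<in>std_simplex d. rational_vec x' \<and> quad_form d A x' = quad_form d A x \<and>
           (\<forall>i\<le>d. 0 < x i \<longrightarrow> 0 < x' i)"
proof -
  define S where "S = {i. i \<le> d \<and> 0 < x i}"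
  obtain i0 where "i0 \<in> S"
    using std_simplex_support_nonempty[OF x] by (auto simp: S_def)
  have x_matvec: "\<forall>i\<in>S. matvec d A x i = matvec d A x i0"
    using matvec_eq_on_support_of_max[OF symm x max] \<open>i0 \<in> S\<close> by (simp add: S_def)
  have x_outside: "\<forall>i\<le>d. i \<notin> S \<longrightarrow> x i = 0"
    using x by (auto simp: S_def std_simplex_def intro: order.antisym)
  have x_sat: "satisfies_lin_eqs (Suc d) (support_system d A S) x"
    using x x_matvec x_outside by (simp add: satisfies_support_system_iff std_simplex_def)
  define e where "e = Min (x ` S)"
  have "finite S" "S \<noteq> {}" "\<forall>i\<in>S. 0 < x i"
    using \<open>i0 \<in> S\<close> by (auto simp: S_def)
  then have "0 < e" "\<forall>i\<in>S. e \<le> x i"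
    by (simp_all add: e_def)
  obtain x' where x': "rational_vec x'" "\<forall>i<Suc d. \<bar>x' i - x i\<bar> < e"
    "\<forall>i\<ge>Suc d. x' i = 0" "satisfies_lin_eqs (Suc d) (support_system d A S) x'"
    using rational_solution_near_vanishing[OF x_sat \<open>0 < e\<close>] by blast
  have x'_sum: "(\<Sum>i\<le>d. x' i) = 1"
    and x'_outside: "\<forall>i\<le>d. i \<notin> S \<longrightarrow> x' i = 0"
    and x'_matvec: "\<forall>i\<in>S. matvec d A x' i = matvec d A x' i0"
    using x'(4) \<open>i0 \<in> S\<close> unfolding satisfies_support_system_iff by blast+
  have x'_pos: "0 < x' i" if "i \<in> S" for i
  proof -
    have "\<bar>x' i - x i\<bar> < e" "e \<le> x i"
      using that x'(2) \<open>\<forall>i\<in>S. e \<le> x i\<close> by (auto simp: S_def)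
    then show ?thesis by simp
  qed
  have "0 \<le> x' i" if "i \<le> d" for i
    using x'_outside x'_pos that by (cases "i \<in> S") (auto intro: less_imp_le)
  then have "x' \<in> std_simplex d"
    using x'_sum x'(3) by (simp add: std_simplex_def Suc_le_eq)
  moreover have "quad_form d A x' = quad_form d A x"
    using x x'_sum x_outside x'_outside
    by (intro quad_form_eq_if_matvec_const[OF symm _ _ x_matvec x'_matvec])
       (simp_all add: std_simplex_def)
  ultimately show ?thesis
    using x'(1) x'_pos by (auto simp: S_def)
qed

lemma rational_maximizer_exists:
  assumes symm: "\<forall>i\<le>d. \<forall>j\<le>d. A i j = A j i"
  shows "\<exists>x\<in>std_simplex d. rational_vec x \<and> (\<forall>y\<in>std_simplex d. quad_form d A y \<le> quad_form d A x)"
proof -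
  obtain x where "x \<in> std_simplex d" "\<forall>y\<in>std_simplex d. quad_form d A y \<le> quad_form d A x"
    using continuous_attains_sup[OF compact_std_simplex std_simplex_nonempty continuous_on_quad_form]
    by blast
  then show ?thesis
    using rational_maximizer_keeping_support[OF symm] by metis
qed

lemma rational_maximizer_in_relint:
  assumes symm: "\<forall>i\<le>d. \<forall>j\<le>d. A i j = A j i"
    and x: "x \<in> std_simplex_relint d"
    and max: "\<forall>y\<in>std_simplex d. quad_form d A y \<le> quad_form d A x"
  shows "\<exists>x'\<in>std_simplex_relint d. rational_vec x' \<and> quad_form d A x' = quad_form d A x"
proof -
  obtain x' where "x' \<in> std_simplex d" "rational_vec x'" "quad_form d A x' = quad_form d A x"
    "\<forall>i\<le>d. 0 < x i \<longrightarrow> 0 < x' i"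
    using rational_maximizer_keeping_support[OF symm _ max] x by (auto simp: std_simplex_relint_def)
  then show ?thesis
    using x by (auto simp: std_simplex_relint_def)
qed

theorem lemma3p1:
  fixes d :: nat and A :: "nat \<Rightarrow> nat \<Rightarrow> rat"
  assumes symm: "\<forall>i\<le>d. \<forall>j\<le>d. A i j = A j i"
  defines "M \<equiv> (SUP y\<in>std_simplex d. quad_form d A y)"
      and "m \<equiv> (INF y\<in>std_simplex d. quad_form d A y)"
  shows "(\<exists>x\<in>std_simplex d. rational_vec x \<and> quad_form d A x = M \<and>
            (\<forall>y\<in>std_simplex d. quad_form d A y \<le> quad_form d A x))
       \<and> (\<exists>x\<in>std_simplex d. rational_vec x \<and> quad_form d A x = m \<and>
            (\<forall>y\<in>std_simplex d. quad_form d A x \<le> quad_form d A y))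
       \<and> ((\<exists>x\<in>std_simplex_relint d. quad_form d A x = M) \<longrightarrow>
            (\<exists>x'\<in>std_simplex_relint d. rational_vec x' \<and> quad_form d A x' = M))
       \<and> ((\<exists>x\<in>std_simplex_relint d. quad_form d A x = m) \<longrightarrow>
            (\<exists>x'\<in>std_simplex_relint d. rational_vec x' \<and> quad_form d A x' = m))"
proof -
  have symm_neg: "\<forall>i\<le>d. \<forall>j\<le>d. - A i j = - A j i"
    using symm by simp
  obtain xM where xM: "xM \<in> std_simplex d" "rational_vec xM"
    "\<forall>y\<in>std_simplex d. quad_form d A y \<le> quad_form d A xM"
    using rational_maximizer_exists[OF symm] by blast
  obtain xm where xm: "xm \<in> std_simplex d" "rational_vec xm"
    "\<forall>y\<in>std_simplex d. quad_form d A xm \<le> quad_form d A y"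
    using rational_maximizer_exists[OF symm_neg] by (auto simp: quad_form_uminus)
  have M: "M = quad_form d A xM"
    unfolding M_def by (rule cSup_eq_maximum) (use xM in auto)
  have m: "m = quad_form d A xm"
    unfolding m_def by (rule cInf_eq_minimum) (use xm in auto)
  have "\<exists>x'\<in>std_simplex_relint d. rational_vec x' \<and> quad_form d A x' = M"
    if "x \<in> std_simplex_relint d" "quad_form d A x = M" for x
    using rational_maximizer_in_relint[OF symm that(1)] xM(3) M that(2) by auto
  moreover have "\<exists>x'\<in>std_simplex_relint d. rational_vec x' \<and> quad_form d A x' = m"
    if "x \<in> std_simplex_relint d" "quad_form d A x = m" for x
    using rational_maximizer_in_relint[OF symm_neg that(1)] xm(3) m that(2)
    by (auto simp: quad_form_uminus)
  ultimately show ?thesis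
    using xM xm M m by blast
qed

end
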